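(* Let $q$ be a prime power. For $1\leq i\leq k$, let $b_i,\delta\in\mathbb{F}_{q^2}$ and let $s_i$ be positive integers. Let $$P_1(x)=\sum_{i=1}^{k}b_i(x^q+x+\delta)^{s_i}-x,\qquad P_2(x)=\sum_{i=1}^{k}b_i^q(x^q+x+\delta)^{qs_i}-x .$$ Then $P_1(x)$ is a permutation polynomial of $\mathbb{F}_{q^2}$ if and only if $P_2(x)$ is a permutation polynomial of $\mathbb{F}_{q^2}$. Moreover, if $P_1(x)$ permutes $\mathbb{F}_{q^2}$, then $$P_1^{-1}(x)+x=\left(P_2^{-1}(x)+x\right)^q,$$ where $P_1^{-1}(x)$ and $P_2^{-1}(x)$ are the compositional inverses of $P_1(x)$ and $P_2(x)$ over $\mathbb{F}_{q^2}$.
   Context: A polynomial $f\in\mathbb{F}_{Q}[x]$ is a permutation polynomial of $\mathbb{F}_Q$ if the map $c\mapsto f(c)$ is a bijection of $\mathbb{F}_Q$. Its compositional inverse $f^{-1}(x)$ is the unique polynomial with $f(f^{-1}(x))\equiv f^{-1}(f(x))\equiv x \pmod{x^Q-x}$; identities between polynomials are understood as identities of the induced functions on $\mathbb{F}_Q$ (i.e. modulo $x^Q-x$). *)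

theory Defs
  imports "HOL-Computational_Algebra.Polynomial" "HOL-Library.Cardinality"
begin

definition perm_poly :: "'a::{finite,field} poly \<Rightarrow> bool" where
  "perm_poly f \<longleftrightarrow> bij (poly f)"

text \<open>Compositional inverse, as an induced function on the field (identities of
polynomials are understood modulo x^Q - x, i.e. as functions).\<close>
definition comp_inv :: "'a::{finite,field} poly \<Rightarrow> 'a \<Rightarrow> 'a" where
  "comp_inv f = inv (poly f)"

end

theory Submission
  imports Defs "HOL-Number_Theory.Residues"
begin

(*
  Write \<sigma> x = x^q for the Frobenius involution of F_{q^2} over F_q and g for the sum
  over i, so that P1 = g - id and P2 = \<sigma> \<circ> g - id. Since g only depends on the trace
  \<sigma> x + x, which is \<sigma>-invariant, g \<circ> \<sigma> = g and therefore P2 = \<sigma> \<circ> P1 \<circ> \<sigma>; this gives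
  the equivalence of the permutation properties and P2^{-1} = \<sigma> \<circ> P1^{-1} \<circ> \<sigma>. For the
  inverse formula it remains to see that x \<mapsto> P1^{-1}(x) + x is \<sigma>-invariant: if
  P1 y = x then z = y + x - \<sigma> x has the same trace as y, hence P1 z = \<sigma> x and
  z + \<sigma> x = y + x.
*)

hide_const (open) UnivPoly.monom Module.module.smult
unbundle no m_inv_syntax

lemma power_card_eq_self:
  fixes x :: "'a::{finite,field}"
  shows "x ^ CARD('a) = x"
proof (cases "x = 0")
  case False
  define G where "G = \<lparr>carrier = UNIV - {0 :: 'a}, monoid.mult = (*), one = 1 :: 'a\<rparr>"
  interpret group G
  proof (rule groupI)
    fix y assume "y \<in> carrier G"
    then show "\<exists>z\<in>carrier G. z \<otimes>\<^bsub>G\<^esub> y = \<one>\<^bsub>G\<^esub>"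
      by (intro bexI[of _ "inverse y"]) (auto simp: G_def)
  qed (auto simp: G_def mult.assoc)
  have pow_G: "y [^]\<^bsub>G\<^esub> n = y ^ n" for y :: 'a and n :: nat
    by (induction n) (simp_all add: G_def mult.commute)
  have "x ^ order G = 1"
    using pow_order_eq_1[of x] False unfolding pow_G by (simp add: G_def)
  moreover have "Suc (order G) = CARD('a)"
    using card_Diff_singleton[of 0 "UNIV :: 'a set"] finite_UNIV_card_ge_0[where ?'a = 'a]
    by (simp add: order_def G_def)
  ultimately show ?thesis
    by (metis power_Suc2 mult_1)
qed simp

lemma CHAR_eq_prime_of_CARD:
  assumes "prime p" "m > 0" "CARD('a::{finite,field}) = p ^ m"
  shows "CHAR('a) = p"
proof -
  have "prime CHAR('a)"
    by (simp add: finite_imp_CHAR_pos prime_CHAR_semidom)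
  moreover have "CHAR('a) dvd p ^ m"
    using CHAR_dvd_CARD[where ?'a = 'a] by (simp add: assms(3))
  ultimately show ?thesis
    using assms(1) prime_dvd_power primes_dvd_imp_eq by blast
qed

lemma bij_conj_involution_iff:
  assumes "\<sigma> \<circ> \<sigma> = id"
  shows "bij (\<sigma> \<circ> f \<circ> \<sigma>) \<longleftrightarrow> bij f"
proof
  have "bij \<sigma>"
    using assms o_bij by blast
  moreover assume "bij (\<sigma> \<circ> f \<circ> \<sigma>)"
  moreover have "f = \<sigma> \<circ> (\<sigma> \<circ> f \<circ> \<sigma>) \<circ> \<sigma>"
    by (simp add: o_assoc assms) (simp flip: o_assoc add: assms)
  ultimately show "bij f"
    by (metis bij_comp)
next
  show "bij f \<Longrightarrow> bij (\<sigma> \<circ> f \<circ> \<sigma>)"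
    using assms o_bij bij_comp by blast
qed

lemma inv_conj_involution:
  assumes "\<sigma> \<circ> \<sigma> = id" and "bij f"
  shows "inv (\<sigma> \<circ> f \<circ> \<sigma>) = \<sigma> \<circ> inv f \<circ> \<sigma>"
proof -
  have "bij \<sigma>" and "inv \<sigma> = \<sigma>"
    using assms(1) o_bij inv_unique_comp by blast+
  then show ?thesis
    using assms(2) by (simp add: o_inv_distrib bij_comp o_assoc)
qed

locale trace_factorization =
  fixes \<sigma> :: "'a::ab_group_add \<Rightarrow> 'a" and g :: "'a \<Rightarrow> 'a"
  assumes additive: "\<sigma> (x + y) = \<sigma> x + \<sigma> y"
    and involutive: "\<sigma> (\<sigma> x) = x"
    and factors_through_trace: "\<sigma> y + y = \<sigma> z + z \<Longrightarrow> g y = g z"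
begin

lemma \<sigma>_diff: "\<sigma> (x - y) = \<sigma> x - \<sigma> y"
  using additive[of "x - y" y] by (simp add: algebra_simps)

lemma \<sigma>_comp_\<sigma>: "\<sigma> \<circ> \<sigma> = id"
  by (simp add: fun_eq_iff involutive)

lemma g_\<sigma>: "g (\<sigma> x) = g x"
  by (rule factors_through_trace) (simp add: involutive add.commute)

lemma conj_\<sigma>: "(\<lambda>x. \<sigma> (g x) - x) = \<sigma> \<circ> (\<lambda>x. g x - x) \<circ> \<sigma>"
  by (simp add: fun_eq_iff \<sigma>_diff g_\<sigma> involutive)

lemma bij_conj_iff: "bij (\<lambda>x. \<sigma> (g x) - x) \<longleftrightarrow> bij (\<lambda>x. g x - x)"
  unfolding conj_\<sigma> using bij_conj_involution_iff[OF \<sigma>_comp_\<sigma>] .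

lemma inv_add_self_\<sigma>:
  assumes "bij (\<lambda>x. g x - x)"
  shows "inv (\<lambda>x. g x - x) (\<sigma> x) + \<sigma> x = inv (\<lambda>x. g x - x) x + x"
proof -
  define y where "y = inv (\<lambda>x. g x - x) x"
  have "g y - y = x"
    using bij_inv_eq_iff[OF assms] y_def by blast
  define z where "z = y + x - \<sigma> x"
  have "\<sigma> z + z = \<sigma> y + y"
    by (simp add: z_def additive \<sigma>_diff involutive)
  then have "g z = g y"
    by (rule factors_through_trace)
  then have "g z - z = g y - z"
    by simp
  also have "\<dots> = \<sigma> x"
    using \<open>g y - y = x\<close> by (simp add: z_def algebra_simps)
  finally have "g z - z = \<sigma> x" .
  then have "z = inv (\<lambda>x. g x - x) (\<sigma> x)"
    using bij_inv_eq_iff[OF assms] by blast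
  then show ?thesis
    by (metis y_def z_def diff_add_cancel)
qed

theorem inv_add_self_eq:
  assumes "bij (\<lambda>x. g x - x)"
  shows "inv (\<lambda>x. g x - x) x + x = \<sigma> (inv (\<lambda>x. \<sigma> (g x) - x) x + x)"
  using assms
  by (simp add: conj_\<sigma> inv_conj_involution[OF \<sigma>_comp_\<sigma>] additive involutive inv_add_self_\<sigma>)

end

theorem proposition3p1:
  fixes q k :: nat and b :: "nat \<Rightarrow> 'a::{finite,field}" and s :: "nat \<Rightarrow> nat"
    and \<delta> :: 'a and P1 P2 L :: "'a poly"
  assumes q_pp: "\<exists>p n. prime p \<and> n > 0 \<and> q = p ^ n"
    and card: "CARD('a) = q ^ 2"
    and k: "k \<ge> 1"
    and s_pos: "\<forall>i\<in>{1..k}. s i > 0"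
    and L_def: "L = monom 1 q + [:0, 1:] + [:\<delta>:]"
    and P1_def: "P1 = (\<Sum>i=1..k. smult (b i) (L ^ s i)) - [:0, 1:]"
    and P2_def: "P2 = (\<Sum>i=1..k. smult (b i ^ q) (L ^ (q * s i))) - [:0, 1:]"
  shows "(perm_poly P1 \<longleftrightarrow> perm_poly P2) \<and>
         (perm_poly P1 \<longrightarrow>
            (\<forall>x. comp_inv P1 x + x = (comp_inv P2 x + x) ^ q))"
proof -
  obtain p n where p: "prime p" "n > 0" "q = p ^ n"
    using q_pp by blast
  then have "CHAR('a) = p"
    using CHAR_eq_prime_of_CARD[of p "n * 2"] card by (simp add: power_mult)
  with p have frobenius: "prime CHAR('a)" "q = CHAR('a) ^ n"
    by simp_all
  define g where "g x = (\<Sum>i=1..k. b i * (x ^ q + x + \<delta>) ^ s i)" for x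
  interpret trace_factorization "\<lambda>x. x ^ q" g
  proof
    show "(x + y) ^ q = x ^ q + y ^ q" for x y :: 'a
      using freshmans_dream'[OF frobenius] .
    show "(x ^ q) ^ q = x" for x :: 'a
      using power_card_eq_self[of x] card by (simp flip: power_mult add: power2_eq_square)
    show "y ^ q + y = z ^ q + z \<Longrightarrow> g y = g z" for y z
      by (simp add: g_def)
  qed
  have P1: "poly P1 = (\<lambda>x. g x - x)"
    by (simp add: fun_eq_iff P1_def L_def g_def poly_sum poly_monom)
  have P2: "poly P2 = (\<lambda>x. g x ^ q - x)"
  proof
    fix x
    have "g x ^ q = (\<Sum>i=1..k. b i ^ q * (x ^ q + x + \<delta>) ^ (q * s i))"
      unfolding g_def freshmans_dream_sum'[OF frobenius]
      by (simp add: power_mult_distrib mult.commute[of q] flip: power_mult)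
    then show "poly P2 x = g x ^ q - x"
      by (simp add: P2_def L_def poly_sum poly_monom)
  qed
  have bij_iff: "bij (poly P2) \<longleftrightarrow> bij (poly P1)"
    unfolding P1 P2 by (fact bij_conj_iff)
  have inv_eq: "inv (poly P1) x + x = (inv (poly P2) x + x) ^ q" if "bij (poly P1)" for x
    using that unfolding P1 P2 by (fact inv_add_self_eq)
  show ?thesis
    unfolding perm_poly_def comp_inv_def by (simp add: bij_iff inv_eq)
qed

end
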